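(* Let $P$ be a quasi-lattice ordered subsemigroup of a discrete group $Q$ and let $(X,P,T)$ be a directed locally compact semigroup action. Let $\Lambda=X*P$ be the topological $P$-graph of the action, with path space $\Omega$, boundary path space $\partial\Omega$ and shift $T$. Then there is a homeomorphism $J:X\to\partial\Omega$ which is $P$-equivariant (for all $(x,m)\in X*P$, $J(x)\cdot m\neq\emptyset$ and $J(x\cdot m)=J(x)\cdot m$) and which implements a groupoid isomorphism $(x,q,y)\mapsto(J(x),q,J(y))$ of $G(X,P,T)$ onto $G(\partial\Omega,P,T)$.
   Context: Partial action: $X*P\subset X\times P$, $(x,m)\mapsto x\cdot m$, $x\cdot e=x$, $(x,mn)\in X*P$ iff $(x,m),(x\cdot m,n)\in X*P$, then $(x\cdot m)\cdot n=x\cdot(mn)$; $U(m)=\{x:(x,m)\in X*P\}$, $m\le n$ iff $n=mp$. Directed: $U(m)\cap U(n)\neq\emptyset$ implies there is $r\ge m,n$ with $U(m)\cap U(n)=U(r)$. Locally compact: $X$ locally compact Hausdorff, $U(m),V(m)=\{x\cdot m\}$ open, $x\mapsto x\cdot m$ a local homeomorphism $U(m)\to V(m)$. Quasi-lattice ordered: $P\cap P^{-1}=\{e\}$ and two elements with a common upper bound have a least upper bound. The graph of the action is $\Lambda=X*P$ (topology from $X\times P$) with $\Lambda^{(0)}=X$, $r(x,n)=x$, $s(x,n)=x\cdot n$, $d(x,n)=n$, $(x,m)(x\cdot m,n)=(x,mn)$. For $\mu,\lambda\in\Lambda$, $\mu\le\lambda$ iff $\lambda=\mu\nu$. $\Omega$: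 nonempty closed hereditary (closed under $\le$-predecessors) directed (any two elements have a common upper bound inside) subsets of $\Lambda$, with the relative Fell topology; $A\cdot n=\{\nu:\exists\mu\in\Lambda^n,\mu\nu\in A\}$ where $\Lambda^n=d^{-1}(n)$. $E\subset\Lambda$ exhaustive: for each $\lambda$ with $r(\lambda)\in r(E)$ there is $\mu\in E$ such that $\lambda,\mu$ have a common upper bound; $\lambda\in A$ extendable in $A$: for every compact exhaustive $E$ with $r(E)$ a neighborhood of $s(\lambda)$ some $\mu\in E$ has $\lambda\mu\in A$; $\partial\Omega$: those $A\in\Omega$ all of whose elements are extendable in $A$. For a partial action $(Y,P,S)$ (here $Y=X$ or $Y=\partial\Omega$ with $A\mapsto A\cdot n$ defined when $A\cdot n\ne\emptyset$), $G(Y,P,S)=\{(x,q,y)\in Y\times Q\times Y:\exists m,n,\ q=mn^{-1},\ x\in U(m), y\in U(n), x\cdot m=y\cdot n\}$ with $(x,q,y)(y,q',z)=(x,qq',z)$, $(x,q,y)^{-1}=(y,q^{-1},x)$ and topology with basis $Z(U,m,n,V)=\{(x,mn^{-1},y):x\in U,y\in V,x\cdot m=y\cdot n\}$. *)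

theory Defs
  imports "HOL-Analysis.Analysis" "HOL-Algebra.Group"
begin

definition sg_le :: "('q, 'b) monoid_scheme \<Rightarrow> 'q set \<Rightarrow> 'q \<Rightarrow> 'q \<Rightarrow> bool" where
  "sg_le Q P m n \<longleftrightarrow> (\<exists>p\<in>P. n = m \<otimes>\<^bsub>Q\<^esub> p)"

definition subsemigroup_with_unit :: "('q, 'b) monoid_scheme \<Rightarrow> 'q set \<Rightarrow> bool" where
  "subsemigroup_with_unit Q P \<longleftrightarrow> group Q \<and> P \<subseteq> carrier Q \<and> \<one>\<^bsub>Q\<^esub> \<in> P \<and>
     (\<forall>m\<in>P. \<forall>n\<in>P. m \<otimes>\<^bsub>Q\<^esub> n \<in> P)"

definition quasi_lattice_ordered :: "('q, 'b) monoid_scheme \<Rightarrow> 'q set \<Rightarrow> bool" where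
  "quasi_lattice_ordered Q P \<longleftrightarrow>
     subsemigroup_with_unit Q P \<and>
     (\<forall>p\<in>P. inv\<^bsub>Q\<^esub> p \<in> P \<longrightarrow> p = \<one>\<^bsub>Q\<^esub>) \<and>
     (\<forall>m\<in>P. \<forall>n\<in>P. (\<exists>r\<in>P. sg_le Q P m r \<and> sg_le Q P n r) \<longrightarrow>
        (\<exists>l\<in>P. sg_le Q P m l \<and> sg_le Q P n l \<and>
           (\<forall>r\<in>P. sg_le Q P m r \<and> sg_le Q P n r \<longrightarrow> sg_le Q P l r)))"

text \<open>A partial action of P on the set Y: D is the domain Y*P, T x m is x\<cdot>m.\<close>
definition partial_action ::
  "('q, 'b) monoid_scheme \<Rightarrow> 'q set \<Rightarrow> 'y set \<Rightarrow> ('y \<times> 'q) set \<Rightarrow> ('y \<Rightarrow> 'q \<Rightarrow> 'y) \<Rightarrow> bool" where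
  "partial_action Q P Y D T \<longleftrightarrow>
     D \<subseteq> Y \<times> P \<and>
     (\<forall>(x,m)\<in>D. T x m \<in> Y) \<and>
     (\<forall>x\<in>Y. (x, \<one>\<^bsub>Q\<^esub>) \<in> D \<and> T x \<one>\<^bsub>Q\<^esub> = x) \<and>
     (\<forall>x\<in>Y. \<forall>m\<in>P. \<forall>n\<in>P.
        ((x, m \<otimes>\<^bsub>Q\<^esub> n) \<in> D \<longleftrightarrow> (x, m) \<in> D \<and> (T x m, n) \<in> D) \<and>
        ((x, m \<otimes>\<^bsub>Q\<^esub> n) \<in> D \<longrightarrow> T (T x m) n = T x (m \<otimes>\<^bsub>Q\<^esub> n)))"

definition dom_U :: "('y \<times> 'q) set \<Rightarrow> 'q \<Rightarrow> 'y set" where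
  "dom_U D m = {x. (x, m) \<in> D}"

definition ran_V :: "('y \<times> 'q) set \<Rightarrow> ('y \<Rightarrow> 'q \<Rightarrow> 'y) \<Rightarrow> 'q \<Rightarrow> 'y set" where
  "ran_V D T m = (\<lambda>x. T x m) ` dom_U D m"

definition directed_action ::
  "('q, 'b) monoid_scheme \<Rightarrow> 'q set \<Rightarrow> ('y \<times> 'q) set \<Rightarrow> bool" where
  "directed_action Q P D \<longleftrightarrow>
     (\<forall>m\<in>P. \<forall>n\<in>P. dom_U D m \<inter> dom_U D n \<noteq> {} \<longrightarrow>
        (\<exists>r\<in>P. sg_le Q P m r \<and> sg_le Q P n r \<and> dom_U D m \<inter> dom_U D n = dom_U D r))"

definition local_homeomorphism_on :: "'y topology \<Rightarrow> 'y set \<Rightarrow> ('y \<Rightarrow> 'y) \<Rightarrow> bool" where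
  "local_homeomorphism_on X U f \<longleftrightarrow>
     (\<forall>x\<in>U. \<exists>W. openin X W \<and> x \<in> W \<and> W \<subseteq> U \<and> openin X (f ` W) \<and>
        homeomorphic_map (subtopology X W) (subtopology X (f ` W)) f)"

definition locally_compact_action ::
  "('q, 'b) monoid_scheme \<Rightarrow> 'q set \<Rightarrow> 'y topology \<Rightarrow> ('y \<times> 'q) set \<Rightarrow> ('y \<Rightarrow> 'q \<Rightarrow> 'y) \<Rightarrow> bool" where
  "locally_compact_action Q P X D T \<longleftrightarrow>
     partial_action Q P (topspace X) D T \<and>
     locally_compact_space X \<and> Hausdorff_space X \<and>
     (\<forall>m\<in>P. openin X (dom_U D m) \<and> openin X (ran_V D T m) \<and>
        local_homeomorphism_on X (dom_U D m) (\<lambda>x. T x m))"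

text \<open>Elements of \<Lambda> are the pairs (x,n) in D; r(x,n) = x, s(x,n) = x\<cdot>n, d(x,n) = n.\<close>
definition lam_topology :: "'q set \<Rightarrow> 'y topology \<Rightarrow> ('y \<times> 'q) set \<Rightarrow> ('y \<times> 'q) topology" where
  "lam_topology P X D = subtopology (prod_topology X (discrete_topology P)) D"

definition lam_s :: "('y \<Rightarrow> 'q \<Rightarrow> 'y) \<Rightarrow> 'y \<times> 'q \<Rightarrow> 'y" where
  "lam_s T lam = T (fst lam) (snd lam)"

text \<open>Composition (x,m)(x\<cdot>m,n) = (x,mn), used only for composable pairs.\<close>
definition lam_comp :: "('q, 'b) monoid_scheme \<Rightarrow> 'y \<times> 'q \<Rightarrow> 'y \<times> 'q \<Rightarrow> 'y \<times> 'q" where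
  "lam_comp Q \<mu> \<nu> = (fst \<mu>, snd \<mu> \<otimes>\<^bsub>Q\<^esub> snd \<nu>)"

definition lam_le :: "('q, 'b) monoid_scheme \<Rightarrow> ('y \<times> 'q) set \<Rightarrow> ('y \<Rightarrow> 'q \<Rightarrow> 'y) \<Rightarrow>
    'y \<times> 'q \<Rightarrow> 'y \<times> 'q \<Rightarrow> bool" where
  "lam_le Q D T \<mu> lam \<longleftrightarrow> (\<exists>\<nu>\<in>D. fst \<nu> = lam_s T \<mu> \<and> lam = lam_comp Q \<mu> \<nu>)"

definition fell_topology :: "'a topology \<Rightarrow> 'a set topology" where
  "fell_topology L = topology_generated_by
     ({{A. closedin L A \<and> A \<inter> K = {}} | K. compactin L K} \<union>
      {{A. closedin L A \<and> A \<inter> V \<noteq> {}} | V. openin L V})"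

definition path_space :: "('q, 'b) monoid_scheme \<Rightarrow> 'q set \<Rightarrow> 'y topology \<Rightarrow> ('y \<times> 'q) set \<Rightarrow>
    ('y \<Rightarrow> 'q \<Rightarrow> 'y) \<Rightarrow> ('y \<times> 'q) set set" where
  "path_space Q P X D T =
     {A. A \<noteq> {} \<and> closedin (lam_topology P X D) A \<and>
         (\<forall>lam\<in>A. \<forall>\<mu>\<in>D. lam_le Q D T \<mu> lam \<longrightarrow> \<mu> \<in> A) \<and>
         (\<forall>\<mu>\<in>A. \<forall>lam\<in>A. \<exists>\<nu>\<in>A. lam_le Q D T \<mu> \<nu> \<and> lam_le Q D T lam \<nu>)}"

definition path_shift :: "('q, 'b) monoid_scheme \<Rightarrow> ('y \<times> 'q) set \<Rightarrow> ('y \<Rightarrow> 'q \<Rightarrow> 'y) \<Rightarrow>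
    ('y \<times> 'q) set \<Rightarrow> 'q \<Rightarrow> ('y \<times> 'q) set" where
  "path_shift Q D T A n =
     {\<nu>\<in>D. \<exists>\<mu>\<in>D. snd \<mu> = n \<and> lam_s T \<mu> = fst \<nu> \<and> lam_comp Q \<mu> \<nu> \<in> A}"

definition exhaustive :: "('q, 'b) monoid_scheme \<Rightarrow> ('y \<times> 'q) set \<Rightarrow> ('y \<Rightarrow> 'q \<Rightarrow> 'y) \<Rightarrow>
    ('y \<times> 'q) set \<Rightarrow> bool" where
  "exhaustive Q D T E \<longleftrightarrow> E \<subseteq> D \<and>
     (\<forall>lam\<in>D. fst lam \<in> fst ` E \<longrightarrow>
        (\<exists>\<mu>\<in>E. \<exists>\<nu>\<in>D. lam_le Q D T lam \<nu> \<and> lam_le Q D T \<mu> \<nu>))"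

definition extendable :: "('q, 'b) monoid_scheme \<Rightarrow> 'q set \<Rightarrow> 'y topology \<Rightarrow> ('y \<times> 'q) set \<Rightarrow>
    ('y \<Rightarrow> 'q \<Rightarrow> 'y) \<Rightarrow> 'y \<times> 'q \<Rightarrow> ('y \<times> 'q) set \<Rightarrow> bool" where
  "extendable Q P X D T lam A \<longleftrightarrow>
     (\<forall>E. compactin (lam_topology P X D) E \<and> exhaustive Q D T E \<and>
          (\<exists>W. openin X W \<and> lam_s T lam \<in> W \<and> W \<subseteq> fst ` E) \<longrightarrow>
        (\<exists>\<mu>\<in>E. fst \<mu> = lam_s T lam \<and> lam_comp Q lam \<mu> \<in> A))"

definition boundary_path_space :: "('q, 'b) monoid_scheme \<Rightarrow> 'q set \<Rightarrow> 'y topology \<Rightarrow>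
    ('y \<times> 'q) set \<Rightarrow> ('y \<Rightarrow> 'q \<Rightarrow> 'y) \<Rightarrow> ('y \<times> 'q) set set" where
  "boundary_path_space Q P X D T =
     {A \<in> path_space Q P X D T. \<forall>lam\<in>A. extendable Q P X D T lam A}"

definition boundary_topology :: "'q set \<Rightarrow> 'y topology \<Rightarrow> ('y \<times> 'q) set \<Rightarrow>
    ('q, 'b) monoid_scheme \<Rightarrow> ('y \<Rightarrow> 'q \<Rightarrow> 'y) \<Rightarrow> ('y \<times> 'q) set topology" where
  "boundary_topology P X D Q T =
     subtopology (fell_topology (lam_topology P X D)) (boundary_path_space Q P X D T)"

text \<open>Domain of the shift action on \<partial>\<Omega>: A\<cdot>n defined iff A\<cdot>n is nonempty.\<close>
definition boundary_dom :: "('q, 'b) monoid_scheme \<Rightarrow> 'q set \<Rightarrow> 'y topology \<Rightarrow>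
    ('y \<times> 'q) set \<Rightarrow> ('y \<Rightarrow> 'q \<Rightarrow> 'y) \<Rightarrow> (('y \<times> 'q) set \<times> 'q) set" where
  "boundary_dom Q P X D T =
     {(A, n). A \<in> boundary_path_space Q P X D T \<and> n \<in> P \<and> path_shift Q D T A n \<noteq> {}}"

definition action_groupoid :: "('q, 'b) monoid_scheme \<Rightarrow> 'q set \<Rightarrow> 'y set \<Rightarrow> ('y \<times> 'q) set \<Rightarrow>
    ('y \<Rightarrow> 'q \<Rightarrow> 'y) \<Rightarrow> ('y \<times> 'q \<times> 'y) set" where
  "action_groupoid Q P Y D S =
     {(x, q, y). x \<in> Y \<and> y \<in> Y \<and>
        (\<exists>m\<in>P. \<exists>n\<in>P. q = m \<otimes>\<^bsub>Q\<^esub> inv\<^bsub>Q\<^esub> n \<and> (x, m) \<in> D \<and> (y, n) \<in> D \<and> S x m = S y n)}"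

definition groupoid_basic_set :: "('q, 'b) monoid_scheme \<Rightarrow> ('y \<times> 'q) set \<Rightarrow> ('y \<Rightarrow> 'q \<Rightarrow> 'y) \<Rightarrow>
    'y set \<Rightarrow> 'q \<Rightarrow> 'q \<Rightarrow> 'y set \<Rightarrow> ('y \<times> 'q \<times> 'y) set" where
  "groupoid_basic_set Q D S U m n V =
     {(x, m \<otimes>\<^bsub>Q\<^esub> inv\<^bsub>Q\<^esub> n, y) | x y. x \<in> U \<and> y \<in> V \<and> (x, m) \<in> D \<and> (y, n) \<in> D \<and> S x m = S y n}"

definition groupoid_topology :: "('q, 'b) monoid_scheme \<Rightarrow> 'q set \<Rightarrow> 'y topology \<Rightarrow> ('y \<times> 'q) set \<Rightarrow>
    ('y \<Rightarrow> 'q \<Rightarrow> 'y) \<Rightarrow> ('y \<times> 'q \<times> 'y) topology" where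
  "groupoid_topology Q P Y D S = topology_generated_by
     {groupoid_basic_set Q D S U m n V | U m n V. openin Y U \<and> openin Y V \<and> m \<in> P \<and> n \<in> P}"

definition gpd_mult :: "('q, 'b) monoid_scheme \<Rightarrow> 'y \<times> 'q \<times> 'y \<Rightarrow> 'y \<times> 'q \<times> 'y \<Rightarrow> 'y \<times> 'q \<times> 'y" where
  "gpd_mult Q g h = (fst g, fst (snd g) \<otimes>\<^bsub>Q\<^esub> fst (snd h), snd (snd h))"

definition gpd_inv :: "('q, 'b) monoid_scheme \<Rightarrow> 'y \<times> 'q \<times> 'y \<Rightarrow> 'y \<times> 'q \<times> 'y" where
  "gpd_inv Q g = (snd (snd g), inv\<^bsub>Q\<^esub> (fst (snd g)), fst g)"

definition groupoid_iso :: "('q, 'b) monoid_scheme \<Rightarrow>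
    ('y \<times> 'q \<times> 'y) set \<Rightarrow> ('y \<times> 'q \<times> 'y) topology \<Rightarrow>
    ('z \<times> 'q \<times> 'z) set \<Rightarrow> ('z \<times> 'q \<times> 'z) topology \<Rightarrow>
    ('y \<times> 'q \<times> 'y \<Rightarrow> 'z \<times> 'q \<times> 'z) \<Rightarrow> bool" where
  "groupoid_iso Q G1 T1 G2 T2 \<Phi> \<longleftrightarrow>
     bij_betw \<Phi> G1 G2 \<and>
     homeomorphic_map (subtopology T1 G1) (subtopology T2 G2) \<Phi> \<and>
     (\<forall>g\<in>G1. \<forall>h\<in>G1. snd (snd g) = fst h \<longrightarrow> \<Phi> (gpd_mult Q g h) = gpd_mult Q (\<Phi> g) (\<Phi> h)) \<and>
     (\<forall>g\<in>G1. \<Phi> (gpd_inv Q g) = gpd_inv Q (\<Phi> g))"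

end

theory Submission
  imports Defs
begin

text \<open>
  For x in X let x\<Lambda> = paths_from D x be the set of paths (x, n) with range x. Directedness
  of the action makes x\<Lambda> directed, so it is a path, and it is trivially extendable.
  Conversely a boundary path A lies in some x\<Lambda> and contains (x, e); testing the extendability
  of (x, e) against the compact exhaustive set K \<times> {n}, with K a compact neighbourhood of x
  inside U(n), puts every (x, n) into A. Hence x \<mapsto> x\<Lambda> is a bijection X \<rightarrow> \<partial>\<Omega>, and
  (x\<Lambda>)\<cdot>m = (x\<cdot>m)\<Lambda>. For the Fell topology it is continuous (missing a compact K pulls back
  to the complement of the compact set r(K), hitting an open set to a union of open sets) and
  open (the image of W is the set of boundary paths hitting W \<times> {e}). A homeomorphic
  conjugacy of partial actions maps the basic sets Z(U, m, n, V) onto Z(J U, m, n, J V),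
  which gives the groupoid isomorphism.
\<close>

lemma generate_topology_on_image:
  assumes inj: "inj_on f (\<Union>B)" and "generate_topology_on B U"
  shows "U \<subseteq> \<Union>B \<and> generate_topology_on ((\<lambda>V. f ` V) ` B) (f ` U)"
  using assms(2)
proof (induction rule: generate_topology_on.induct)
  case Empty
  then show ?case by (simp add: generate_topology_on.Empty)
next
  case (Int a b)
  have "f ` (a \<inter> b) = f ` a \<inter> f ` b"
    using Int.IH inj by (intro inj_on_image_Int[of f "\<Union>B"]) auto
  then show ?case using Int.IH by (auto intro: generate_topology_on.Int)
next
  case (UN K)
  have "f ` \<Union>K = \<Union>((\<lambda>k. f ` k) ` K)" by auto
  then show ?case using UN.IH by (auto intro: generate_topology_on.UN)
next
  case (Basis s)
  then show ?case by (auto intro: generate_topology_on.Basis)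
qed

lemma homeomorphic_map_topology_generated_by_image:
  assumes inj: "inj_on f (\<Union>B)"
  shows "homeomorphic_map (topology_generated_by B) (topology_generated_by ((\<lambda>V. f ` V) ` B)) f"
proof (rule bijective_open_imp_homeomorphic_map)
  show "continuous_map (topology_generated_by B) (topology_generated_by ((\<lambda>V. f ` V) ` B)) f"
  proof (rule continuous_on_generated_topo)
    fix V' assume "V' \<in> (\<lambda>V. f ` V) ` B"
    then obtain V where "V \<in> B" "V' = f ` V" by auto
    moreover have "f -` f ` V \<inter> \<Union>B = V" if "V \<in> B" for V
      using that inj unfolding inj_on_def by auto
    ultimately show "openin (topology_generated_by B) (f -` V' \<inter> topspace (topology_generated_by B))"
      by (simp add: topology_generated_by_Basis)
  qed auto
  show "open_map (topology_generated_by B) (topology_generated_by ((\<lambda>V. f ` V) ` B)) f"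
    unfolding open_map_def openin_topology_generated_by_iff
    using generate_topology_on_image[OF inj] by blast
qed (use inj in auto)

lemma action_groupoid_eq_Union_basic_sets:
  "action_groupoid Q P (topspace Y) D S =
     (\<Union>m\<in>P. \<Union>n\<in>P. groupoid_basic_set Q D S (topspace Y) m n (topspace Y))"
  unfolding action_groupoid_def groupoid_basic_set_def by blast

lemma topspace_groupoid_topology:
  "topspace (groupoid_topology Q P Y D S) = action_groupoid Q P (topspace Y) D S"
proof -
  let ?B = "{groupoid_basic_set Q D S U m n V | U m n V. openin Y U \<and> openin Y V \<and> m \<in> P \<and> n \<in> P}"
  have "\<Union>?B \<subseteq> action_groupoid Q P (topspace Y) D S"
  proof
    fix g assume "g \<in> \<Union>?B"
    then obtain U m n V where "g \<in> groupoid_basic_set Q D S U m n V"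
      "openin Y U" "openin Y V" "m \<in> P" "n \<in> P"
      by blast
    then show "g \<in> action_groupoid Q P (topspace Y) D S"
      using openin_subset unfolding groupoid_basic_set_def action_groupoid_def by blast
  qed
  moreover have "action_groupoid Q P (topspace Y) D S \<subseteq> \<Union>?B"
  proof
    fix g assume "g \<in> action_groupoid Q P (topspace Y) D S"
    then obtain m n where "m \<in> P" "n \<in> P" "g \<in> groupoid_basic_set Q D S (topspace Y) m n (topspace Y)"
      unfolding action_groupoid_eq_Union_basic_sets by blast
    then show "g \<in> \<Union>?B"
      by blast
  qed
  ultimately show ?thesis
    unfolding groupoid_topology_def by simp
qed

lemma topspace_fell_topology: "topspace (fell_topology L) = {A. closedin L A}"
proof (intro equalityI subsetI)
  fix A assume "A \<in> topspace (fell_topology L)"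
  then show "A \<in> {A. closedin L A}"
    unfolding fell_topology_def by auto
next
  fix A assume "A \<in> {A. closedin L A}"
  moreover have "{A. closedin L A \<and> A \<inter> {} = {}} \<in> {{A. closedin L A \<and> A \<inter> K = {}} | K. compactin L K}"
    by (rule CollectI, rule exI[of _ "{}"]) simp
  ultimately show "A \<in> topspace (fell_topology L)"
    unfolding fell_topology_def topology_generated_by_topspace by (intro UnionI[OF UnI1]) auto
qed

lemma openin_fell_topology_hit:
  "openin L V \<Longrightarrow> openin (fell_topology L) {A. closedin L A \<and> A \<inter> V \<noteq> {}}"
  unfolding fell_topology_def by (rule topology_generated_by_Basis) blast

lemma continuous_map_fell_topologyI:
  assumes closed: "\<And>x. x \<in> topspace X \<Longrightarrow> closedin L (f x)"
    and miss: "\<And>K. compactin L K \<Longrightarrow> openin X {x \<in> topspace X. f x \<inter> K = {}}"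
    and hit: "\<And>V. openin L V \<Longrightarrow> openin X {x \<in> topspace X. f x \<inter> V \<noteq> {}}"
  shows "continuous_map X (fell_topology L) f"
  unfolding fell_topology_def
proof (rule continuous_on_generated_topo)
  fix U assume "U \<in> {{A. closedin L A \<and> A \<inter> K = {}} | K. compactin L K} \<union>
      {{A. closedin L A \<and> A \<inter> V \<noteq> {}} | V. openin L V}"
  then consider K where "compactin L K" "U = {A. closedin L A \<and> A \<inter> K = {}}"
    | V where "openin L V" "U = {A. closedin L A \<and> A \<inter> V \<noteq> {}}"
    by blast
  then show "openin X (f -` U \<inter> topspace X)"
  proof cases
    case 1
    then have "f -` U \<inter> topspace X = {x \<in> topspace X. f x \<inter> K = {}}"
      using closed by auto
    then show ?thesis using miss[OF 1(1)] by simp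
  next
    case 2
    then have "f -` U \<inter> topspace X = {x \<in> topspace X. f x \<inter> V \<noteq> {}}"
      using closed by auto
    then show ?thesis using hit[OF 2(1)] by simp
  qed
next
  show "f ` topspace X \<subseteq> \<Union>({{A. closedin L A \<and> A \<inter> K = {}} | K. compactin L K} \<union>
      {{A. closedin L A \<and> A \<inter> V \<noteq> {}} | V. openin L V})"
    using closed topspace_fell_topology[of L] unfolding fell_topology_def by auto
qed

locale conjugate_partial_actions =
  fixes Q :: "('q, 'b) monoid_scheme" and P :: "'q set"
    and X :: "'x topology" and D :: "('x \<times> 'q) set" and S :: "'x \<Rightarrow> 'q \<Rightarrow> 'x"
    and Y :: "'y topology" and D' :: "('y \<times> 'q) set" and S' :: "'y \<Rightarrow> 'q \<Rightarrow> 'y"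
    and J :: "'x \<Rightarrow> 'y"
  assumes homeomorphic: "homeomorphic_map X Y J"
    and action_closed: "(x, m) \<in> D \<Longrightarrow> S x m \<in> topspace X"
    and domain_iff: "x \<in> topspace X \<Longrightarrow> (J x, m) \<in> D' \<longleftrightarrow> (x, m) \<in> D"
    and equivariant: "(x, m) \<in> D \<Longrightarrow> S' (J x) m = J (S x m)"
begin

abbreviation gpd_map :: "'x \<times> 'q \<times> 'x \<Rightarrow> 'y \<times> 'q \<times> 'y" where
  "gpd_map \<equiv> \<lambda>(x, q, y). (J x, q, J y)"

lemma inj_on_J: "inj_on J (topspace X)"
  using homeomorphic homeomorphic_imp_injective_map by blast

lemma image_J: "J ` topspace X = topspace Y"
  using homeomorphic homeomorphic_imp_surjective_map by blast

lemma shift_eq_shift_iff: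
  assumes "(x, m) \<in> D" "(y, n) \<in> D"
  shows "S' (J x) m = S' (J y) n \<longleftrightarrow> S x m = S y n"
  using assms equivariant action_closed inj_on_J unfolding inj_on_def by metis

lemma image_basic_set:
  assumes "U \<subseteq> topspace X" "V \<subseteq> topspace X"
  shows "gpd_map ` groupoid_basic_set Q D S U m n V = groupoid_basic_set Q D' S' (J ` U) m n (J ` V)"
proof (intro equalityI subsetI)
  fix g assume "g \<in> gpd_map ` groupoid_basic_set Q D S U m n V"
  then obtain h where "h \<in> groupoid_basic_set Q D S U m n V" and g_h: "g = gpd_map h"
    by blast
  then obtain x y where "h = (x, m \<otimes>\<^bsub>Q\<^esub> inv\<^bsub>Q\<^esub> n, y)" and xy: "x \<in> U" "y \<in> V"
    "(x, m) \<in> D" "(y, n) \<in> D" "S x m = S y n"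
    unfolding groupoid_basic_set_def by blast
  then have g: "g = (J x, m \<otimes>\<^bsub>Q\<^esub> inv\<^bsub>Q\<^esub> n, J y)"
    using g_h by simp
  have "(J x, m) \<in> D'" "(J y, n) \<in> D'"
    using xy assms domain_iff by auto
  moreover have "S' (J x) m = S' (J y) n"
    using shift_eq_shift_iff[OF xy(3,4)] xy(5) by simp
  ultimately show "g \<in> groupoid_basic_set Q D' S' (J ` U) m n (J ` V)"
    unfolding g groupoid_basic_set_def using xy by blast
next
  fix g assume "g \<in> groupoid_basic_set Q D' S' (J ` U) m n (J ` V)"
  then obtain x y where g: "g = gpd_map (x, m \<otimes>\<^bsub>Q\<^esub> inv\<^bsub>Q\<^esub> n, y)" and xy: "x \<in> U" "y \<in> V"
    "(J x, m) \<in> D'" "(J y, n) \<in> D'" "S' (J x) m = S' (J y) n"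
    unfolding groupoid_basic_set_def by auto
  have D: "(x, m) \<in> D" "(y, n) \<in> D"
    using xy assms domain_iff by auto
  moreover have "S x m = S y n"
    using shift_eq_shift_iff[OF D] xy by simp
  ultimately have "(x, m \<otimes>\<^bsub>Q\<^esub> inv\<^bsub>Q\<^esub> n, y) \<in> groupoid_basic_set Q D S U m n V"
    unfolding groupoid_basic_set_def using xy by blast
  then show "g \<in> gpd_map ` groupoid_basic_set Q D S U m n V"
    unfolding g by blast
qed

lemma image_action_groupoid:
  "gpd_map ` action_groupoid Q P (topspace X) D S = action_groupoid Q P (topspace Y) D' S'"
  unfolding action_groupoid_eq_Union_basic_sets image_UN by (simp add: image_basic_set image_J)

lemma inj_on_action_groupoid: "inj_on gpd_map (action_groupoid Q P (topspace X) D S)"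
  using inj_on_J unfolding inj_on_def action_groupoid_def by auto

lemma openin_iff_image_J: "openin Y W \<longleftrightarrow> (\<exists>U. openin X U \<and> W = J ` U)"
proof
  assume "openin Y W"
  moreover have "W = J ` {x \<in> topspace X. J x \<in> W}"
  proof (intro equalityI subsetI)
    fix w assume "w \<in> W"
    then obtain x where "x \<in> topspace X" "w = J x"
      using openin_subset[OF \<open>openin Y W\<close>] image_J by blast
    then show "w \<in> J ` {x \<in> topspace X. J x \<in> W}"
      using \<open>w \<in> W\<close> by blast
  qed auto
  moreover have "openin X {x \<in> topspace X. J x \<in> W}"
    using homeomorphic_imp_continuous_map[OF homeomorphic] \<open>openin Y W\<close>
    by (rule openin_continuous_map_preimage)
  ultimately show "\<exists>U. openin X U \<and> W = J ` U"
    by blast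
next
  assume "\<exists>U. openin X U \<and> W = J ` U"
  then show "openin Y W"
    using homeomorphic_map_openness_eq[OF homeomorphic] by blast
qed

lemma image_groupoid_subbasis:
  "{groupoid_basic_set Q D' S' U m n V | U m n V. openin Y U \<and> openin Y V \<and> m \<in> P \<and> n \<in> P} =
   (\<lambda>Z. gpd_map ` Z) ` {groupoid_basic_set Q D S U m n V | U m n V. openin X U \<and> openin X V \<and> m \<in> P \<and> n \<in> P}"
proof (intro equalityI subsetI)
  fix Z assume "Z \<in> {groupoid_basic_set Q D' S' U m n V | U m n V. openin Y U \<and> openin Y V \<and> m \<in> P \<and> n \<in> P}"
  then obtain U V m n where "Z = groupoid_basic_set Q D' S' (J ` U) m n (J ` V)"
    "openin X U" "openin X V" "m \<in> P" "n \<in> P"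
    unfolding openin_iff_image_J by blast
  then show "Z \<in> (\<lambda>Z. gpd_map ` Z) ` {groupoid_basic_set Q D S U m n V | U m n V. openin X U \<and> openin X V \<and> m \<in> P \<and> n \<in> P}"
    using image_basic_set openin_subset by blast
next
  fix Z assume "Z \<in> (\<lambda>Z. gpd_map ` Z) ` {groupoid_basic_set Q D S U m n V | U m n V. openin X U \<and> openin X V \<and> m \<in> P \<and> n \<in> P}"
  then obtain U V m n where "Z = groupoid_basic_set Q D' S' (J ` U) m n (J ` V)"
    "openin X U" "openin X V" "m \<in> P" "n \<in> P"
    using image_basic_set openin_subset by blast
  then show "Z \<in> {groupoid_basic_set Q D' S' U m n V | U m n V. openin Y U \<and> openin Y V \<and> m \<in> P \<and> n \<in> P}"
    unfolding openin_iff_image_J by blast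
qed

lemma homeomorphic_map_groupoid_topology:
  "homeomorphic_map (groupoid_topology Q P X D S) (groupoid_topology Q P Y D' S') gpd_map"
proof -
  have "inj_on gpd_map (topspace (groupoid_topology Q P X D S))"
    by (simp add: topspace_groupoid_topology inj_on_action_groupoid)
  then show ?thesis
    unfolding groupoid_topology_def image_groupoid_subbasis
    by (intro homeomorphic_map_topology_generated_by_image) simp
qed

theorem groupoid_iso_gpd_map:
  "groupoid_iso Q (action_groupoid Q P (topspace X) D S) (groupoid_topology Q P X D S)
     (action_groupoid Q P (topspace Y) D' S') (groupoid_topology Q P Y D' S') gpd_map"
  unfolding groupoid_iso_def
proof (intro conjI ballI impI)
  show "bij_betw gpd_map (action_groupoid Q P (topspace X) D S) (action_groupoid Q P (topspace Y) D' S')"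
    by (simp add: bij_betw_def inj_on_action_groupoid image_action_groupoid)
  show "homeomorphic_map (subtopology (groupoid_topology Q P X D S) (action_groupoid Q P (topspace X) D S))
     (subtopology (groupoid_topology Q P Y D' S') (action_groupoid Q P (topspace Y) D' S')) gpd_map"
    using homeomorphic_map_groupoid_topology
    by (metis subtopology_topspace topspace_groupoid_topology)
next
  fix g h show "gpd_map (gpd_mult Q g h) = gpd_mult Q (gpd_map g) (gpd_map h)"
    by (cases g; cases h) (simp add: gpd_mult_def)
next
  fix g show "gpd_map (gpd_inv Q g) = gpd_inv Q (gpd_map g)"
    by (cases g) (simp add: gpd_inv_def)
qed

end

definition paths_from :: "('x \<times> 'q) set \<Rightarrow> 'x \<Rightarrow> ('x \<times> 'q) set" where
  "paths_from D x = {\<mu> \<in> D. fst \<mu> = x}"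

locale directed_locally_compact_action =
  fixes Q :: "('q, 'b) monoid_scheme" and P :: "'q set"
    and X :: "'x topology" and D :: "('x \<times> 'q) set" and T :: "'x \<Rightarrow> 'q \<Rightarrow> 'x"
  assumes quasi_lattice_ordered: "quasi_lattice_ordered Q P"
    and locally_compact_action: "locally_compact_action Q P X D T"
    and directed_action: "directed_action Q P D"
begin

abbreviation "L \<equiv> lam_topology P X D"

lemma one_in_P: "\<one>\<^bsub>Q\<^esub> \<in> P"
  and one_mult: "m \<in> P \<Longrightarrow> \<one>\<^bsub>Q\<^esub> \<otimes>\<^bsub>Q\<^esub> m = m"
  using quasi_lattice_ordered group.is_monoid monoid.l_one
  unfolding quasi_lattice_ordered_def subsemigroup_with_unit_def by (blast, fastforce)

lemma partial_action: "partial_action Q P (topspace X) D T"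
  and locally_compact_space: "locally_compact_space X"
  and Hausdorff_space: "Hausdorff_space X"
  and openin_dom_U: "m \<in> P \<Longrightarrow> openin X (dom_U D m)"
  using locally_compact_action unfolding locally_compact_action_def by auto

lemma domain_subset: "D \<subseteq> topspace X \<times> P"
  and action_closed: "(x, m) \<in> D \<Longrightarrow> T x m \<in> topspace X"
  and unit_in_domain: "x \<in> topspace X \<Longrightarrow> (x, \<one>\<^bsub>Q\<^esub>) \<in> D"
  and action_one: "x \<in> topspace X \<Longrightarrow> T x \<one>\<^bsub>Q\<^esub> = x"
  using partial_action unfolding partial_action_def by auto

lemma domain_mult_iff: "(x, m) \<in> D \<Longrightarrow> p \<in> P \<Longrightarrow> (x, m \<otimes>\<^bsub>Q\<^esub> p) \<in> D \<longleftrightarrow> (T x m, p) \<in> D"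
  using partial_action domain_subset unfolding partial_action_def by blast

lemma lam_le_fst: "lam_le Q D T \<mu> \<nu> \<Longrightarrow> fst \<nu> = fst \<mu>"
  unfolding lam_le_def lam_comp_def by auto

lemma lam_le_one: "(x, m) \<in> D \<Longrightarrow> lam_le Q D T (x, \<one>\<^bsub>Q\<^esub>) (x, m)"
  using domain_subset action_one one_mult
  unfolding lam_le_def lam_s_def lam_comp_def by (force intro!: bexI[of _ "(x, m)"])

lemma common_extension:
  assumes "(x, m) \<in> D" "(x, n) \<in> D"
  shows "\<exists>\<nu>\<in>D. lam_le Q D T (x, m) \<nu> \<and> lam_le Q D T (x, n) \<nu>"
proof -
  have P: "m \<in> P" "n \<in> P" using assms domain_subset by auto
  have "x \<in> dom_U D m \<inter> dom_U D n" using assms unfolding dom_U_def by auto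
  then obtain r where r: "sg_le Q P m r" "sg_le Q P n r" "dom_U D m \<inter> dom_U D n = dom_U D r"
    using directed_action P unfolding directed_action_def by blast
  obtain p p' where pp': "p \<in> P" "r = m \<otimes>\<^bsub>Q\<^esub> p" "p' \<in> P" "r = n \<otimes>\<^bsub>Q\<^esub> p'"
    using r(1,2) unfolding sg_le_def by auto
  have "(x, r) \<in> D" using r(3) \<open>x \<in> dom_U D m \<inter> dom_U D n\<close> unfolding dom_U_def by auto
  then have "(T x m, p) \<in> D" "(T x n, p') \<in> D"
    using domain_mult_iff[OF assms(1) pp'(1)] domain_mult_iff[OF assms(2) pp'(3)] pp' by auto
  then show ?thesis using \<open>(x, r) \<in> D\<close> pp'
    unfolding lam_le_def lam_s_def lam_comp_def by (intro bexI[of _ "(x, r)"]) force+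
qed

lemma path_shift_paths_from:
  assumes "(x, m) \<in> D"
  shows "path_shift Q D T (paths_from D x) m = paths_from D (T x m)"
proof (intro equalityI subsetI)
  fix \<nu> assume "\<nu> \<in> path_shift Q D T (paths_from D x) m"
  then show "\<nu> \<in> paths_from D (T x m)"
    unfolding path_shift_def paths_from_def lam_s_def lam_comp_def by auto
next
  fix \<nu> assume \<nu>: "\<nu> \<in> paths_from D (T x m)"
  then obtain p where p: "\<nu> = (T x m, p)" "(T x m, p) \<in> D" "p \<in> P"
    using domain_subset unfolding paths_from_def by (cases \<nu>) auto
  then have "(x, m \<otimes>\<^bsub>Q\<^esub> p) \<in> D" using domain_mult_iff[OF assms] by auto
  then show "\<nu> \<in> path_shift Q D T (paths_from D x) m"
    using p assms unfolding path_shift_def paths_from_def lam_s_def lam_comp_def by force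
qed

lemma one_in_paths_from: "x \<in> topspace X \<Longrightarrow> (x, \<one>\<^bsub>Q\<^esub>) \<in> paths_from D x"
  using unit_in_domain unfolding paths_from_def by auto

lemma inj_on_paths_from: "inj_on (paths_from D) (topspace X)"
proof (rule inj_onI)
  fix x y assume "x \<in> topspace X" "paths_from D x = paths_from D y"
  then have "(x, \<one>\<^bsub>Q\<^esub>) \<in> paths_from D y"
    using one_in_paths_from by metis
  then show "x = y"
    unfolding paths_from_def by simp
qed

lemma closedin_paths_from:
  assumes "x \<in> topspace X" shows "closedin L (paths_from D x)"
proof -
  have "closedin X {x}"
    using assms Hausdorff_space by (simp add: Hausdorff_imp_t1_space closedin_t1_singleton)
  then have "closedin (prod_topology X (discrete_topology P)) ({x} \<times> P)"
    by (simp add: closedin_prod_Times_iff)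
  moreover have "paths_from D x = ({x} \<times> P) \<inter> D"
    using domain_subset unfolding paths_from_def by auto
  ultimately show ?thesis
    unfolding lam_topology_def closedin_subtopology by blast
qed

lemma paths_from_in_path_space:
  assumes "x \<in> topspace X" shows "paths_from D x \<in> path_space Q P X D T"
  unfolding path_space_def mem_Collect_eq
proof (intro conjI ballI impI)
  show "paths_from D x \<noteq> {}"
    using one_in_paths_from[OF assms] by blast
  show "closedin L (paths_from D x)"
    using closedin_paths_from[OF assms] .
next
  fix \<xi> \<mu> assume "\<xi> \<in> paths_from D x" "\<mu> \<in> D" "lam_le Q D T \<mu> \<xi>"
  then show "\<mu> \<in> paths_from D x"
    using lam_le_fst unfolding paths_from_def by auto
next
  fix \<mu> \<xi> assume "\<mu> \<in> paths_from D x" "\<xi> \<in> paths_from D x"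
  then have "fst \<mu> = x" "fst \<xi> = x" "\<mu> \<in> D" "\<xi> \<in> D"
    unfolding paths_from_def by auto
  then obtain m n where "\<mu> = (x, m)" "\<xi> = (x, n)" "(x, m) \<in> D" "(x, n) \<in> D"
    by (metis prod.collapse)
  moreover obtain \<nu> where "\<nu> \<in> D" "lam_le Q D T (x, m) \<nu>" "lam_le Q D T (x, n) \<nu>"
    using common_extension calculation(3,4) by blast
  moreover have "\<nu> \<in> paths_from D x"
    using \<open>\<nu> \<in> D\<close> lam_le_fst[OF \<open>lam_le Q D T (x, m) \<nu>\<close>] unfolding paths_from_def by simp
  ultimately show "\<exists>\<nu>\<in>paths_from D x. lam_le Q D T \<mu> \<nu> \<and> lam_le Q D T \<xi> \<nu>"
    by blast
qed

lemma paths_from_in_boundary: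
  assumes "x \<in> topspace X" shows "paths_from D x \<in> boundary_path_space Q P X D T"
proof -
  have "extendable Q P X D T \<xi> (paths_from D x)" if \<xi>: "\<xi> \<in> paths_from D x" for \<xi>
    unfolding extendable_def
  proof (intro allI impI)
    fix E assume E: "compactin L E \<and> exhaustive Q D T E \<and>
      (\<exists>W. openin X W \<and> lam_s T \<xi> \<in> W \<and> W \<subseteq> fst ` E)"
    then obtain W where "lam_s T \<xi> \<in> W" "W \<subseteq> fst ` E"
      by blast
    then obtain \<mu> where \<mu>: "\<mu> \<in> E" "fst \<mu> = lam_s T \<xi>"
      by (metis imageE subsetD)
    obtain m where m: "\<xi> = (x, m)" "(x, m) \<in> D"
      using \<xi> unfolding paths_from_def by (cases \<xi>) auto
    have "\<mu> \<in> D"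
      using E \<mu>(1) unfolding exhaustive_def by auto
    then obtain p where "\<mu> = (T x m, p)" "(T x m, p) \<in> D" "p \<in> P"
      using \<mu>(2) m domain_subset unfolding lam_s_def by (cases \<mu>) auto
    then have "lam_comp Q \<xi> \<mu> \<in> paths_from D x"
      using m domain_mult_iff unfolding lam_comp_def paths_from_def by auto
    then show "\<exists>\<mu>\<in>E. fst \<mu> = lam_s T \<xi> \<and> lam_comp Q \<xi> \<mu> \<in> paths_from D x"
      using \<mu> by blast
  qed
  then show ?thesis
    using paths_from_in_path_space[OF assms] unfolding boundary_path_space_def by blast
qed

lemma compactin_Times_singleton:
  assumes "compactin X K" "K \<subseteq> dom_U D n" "n \<in> P"
  shows "compactin L (K \<times> {n})"
proof -
  have "compactin (prod_topology X (discrete_topology P)) (K \<times> {n})"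
    using assms by (simp add: compactin_Times compactin_discrete_topology)
  moreover have "K \<times> {n} \<subseteq> D"
    using assms(2) unfolding dom_U_def by auto
  ultimately show ?thesis
    unfolding lam_topology_def compactin_subtopology by blast
qed

lemma exhaustive_Times_singleton:
  assumes "K \<subseteq> dom_U D n"
  shows "exhaustive Q D T (K \<times> {n})"
  unfolding exhaustive_def
proof (intro conjI ballI impI)
  show "K \<times> {n} \<subseteq> D"
    using assms unfolding dom_U_def by auto
  fix \<xi> assume \<xi>: "\<xi> \<in> D" "fst \<xi> \<in> fst ` (K \<times> {n})"
  then obtain y m where "\<xi> = (y, m)" "y \<in> K"
    by (cases \<xi>) auto
  moreover have "(y, n) \<in> D"
    using \<open>y \<in> K\<close> assms unfolding dom_U_def by auto
  ultimately show "\<exists>\<mu>\<in>K \<times> {n}. \<exists>\<nu>\<in>D. lam_le Q D T \<xi> \<nu> \<and> lam_le Q D T \<mu> \<nu>"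
    using common_extension \<xi>(1) by blast
qed

lemma paths_from_subset_boundary_path:
  assumes A: "A \<in> boundary_path_space Q P X D T" and x: "(x, \<one>\<^bsub>Q\<^esub>) \<in> A"
  shows "paths_from D x \<subseteq> A"
proof
  fix \<xi> assume "\<xi> \<in> paths_from D x"
  then obtain n where \<xi>: "\<xi> = (x, n)" "(x, n) \<in> D"
    unfolding paths_from_def by (cases \<xi>) auto
  then have n: "n \<in> P" "x \<in> dom_U D n" "x \<in> topspace X"
    using domain_subset unfolding dom_U_def by auto
  have "neighbourhood_base_of (compactin X) X"
    using locally_compact_space Hausdorff_space locally_compact_space_neighbourhood_base by blast
  then have "\<exists>W K. openin X W \<and> compactin X K \<and> x \<in> W \<and> W \<subseteq> K \<and> K \<subseteq> dom_U D n"
    using openin_dom_U[OF n(1)] n(2) unfolding neighbourhood_base_of by simp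
  then obtain W K where WK: "openin X W" "compactin X K" "x \<in> W" "W \<subseteq> K" "K \<subseteq> dom_U D n"
    by blast
  have "extendable Q P X D T (x, \<one>\<^bsub>Q\<^esub>) A"
    using A x unfolding boundary_path_space_def by blast
  moreover have "lam_s T (x, \<one>\<^bsub>Q\<^esub>) = x"
    using action_one[OF n(3)] unfolding lam_s_def by simp
  then have "\<exists>W. openin X W \<and> lam_s T (x, \<one>\<^bsub>Q\<^esub>) \<in> W \<and> W \<subseteq> fst ` (K \<times> {n})"
    using WK by auto
  ultimately obtain \<mu> where "\<mu> \<in> K \<times> {n}" "lam_comp Q (x, \<one>\<^bsub>Q\<^esub>) \<mu> \<in> A"
    using compactin_Times_singleton[OF WK(2,5) n(1)] exhaustive_Times_singleton[OF WK(5)]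
    unfolding extendable_def by meson
  then show "\<xi> \<in> A"
    using \<xi> one_mult[OF n(1)] unfolding lam_comp_def by auto
qed

lemma boundary_path_eq_paths_from:
  assumes A: "A \<in> boundary_path_space Q P X D T"
  obtains x where "x \<in> topspace X" "A = paths_from D x"
proof -
  have A_props: "A \<noteq> {}" "closedin L A" "\<forall>\<xi>\<in>A. \<forall>\<mu>\<in>D. lam_le Q D T \<mu> \<xi> \<longrightarrow> \<mu> \<in> A"
    "\<forall>\<mu>\<in>A. \<forall>\<xi>\<in>A. \<exists>\<nu>\<in>A. lam_le Q D T \<mu> \<nu> \<and> lam_le Q D T \<xi> \<nu>"
    using A unfolding boundary_path_space_def path_space_def by blast+
  have "A \<subseteq> D"
    using closedin_subset[OF A_props(2)] domain_subset unfolding lam_topology_def by auto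
  then obtain x m where xm: "(x, m) \<in> A" "(x, m) \<in> D"
    using A_props(1) by auto
  then have x: "x \<in> topspace X"
    using domain_subset by auto
  have "A \<subseteq> paths_from D x"
  proof
    fix \<xi> assume "\<xi> \<in> A"
    then obtain \<nu> where "lam_le Q D T (x, m) \<nu>" "lam_le Q D T \<xi> \<nu>"
      using A_props(4) xm(1) by blast
    then have "fst \<xi> = x"
      using lam_le_fst[of "(x, m)" \<nu>] lam_le_fst[of \<xi> \<nu>] by simp
    then show "\<xi> \<in> paths_from D x"
      using \<open>\<xi> \<in> A\<close> \<open>A \<subseteq> D\<close> unfolding paths_from_def by blast
  qed
  moreover have "(x, \<one>\<^bsub>Q\<^esub>) \<in> A"
    using A_props(3) xm(1) lam_le_one[OF xm(2)] unit_in_domain[OF x] by blast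
  ultimately have "A = paths_from D x"
    using paths_from_subset_boundary_path[OF A] by blast
  then show ?thesis
    using that x by blast
qed

lemma image_paths_from: "paths_from D ` topspace X = boundary_path_space Q P X D T"
proof (intro equalityI subsetI)
  fix A assume "A \<in> boundary_path_space Q P X D T"
  then obtain x where "x \<in> topspace X" "A = paths_from D x"
    by (rule boundary_path_eq_paths_from)
  then show "A \<in> paths_from D ` topspace X"
    by blast
next
  fix A assume "A \<in> paths_from D ` topspace X"
  then show "A \<in> boundary_path_space Q P X D T"
    using paths_from_in_boundary by blast
qed

lemma topspace_boundary_topology:
  "topspace (boundary_topology P X D Q T) = boundary_path_space Q P X D T"
  unfolding boundary_topology_def topspace_subtopology topspace_fell_topology
    boundary_path_space_def path_space_def by blast

lemma openin_paths_from_miss: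
  assumes K: "compactin L K"
  shows "openin X {x \<in> topspace X. paths_from D x \<inter> K = {}}"
proof -
  have "continuous_map L X fst"
    unfolding lam_topology_def by (intro continuous_map_from_subtopology continuous_map_fst)
  then have "closedin X (fst ` K)"
    using K Hausdorff_space image_compactin compactin_imp_closedin by blast
  moreover have "K \<subseteq> D"
    using compactin_subset_topspace[OF K] unfolding lam_topology_def by auto
  then have "{x \<in> topspace X. paths_from D x \<inter> K = {}} = topspace X - fst ` K"
    unfolding paths_from_def by force
  ultimately show ?thesis
    by (simp add: openin_diff)
qed

lemma openin_paths_from_hit:
  assumes "openin L V"
  shows "openin X {x \<in> topspace X. paths_from D x \<inter> V \<noteq> {}}"
proof -
  obtain Ob where Ob: "openin (prod_topology X (discrete_topology P)) Ob" "V = Ob \<inter> D"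
    using assms unfolding lam_topology_def openin_subtopology by blast
  have "{x \<in> topspace X. paths_from D x \<inter> V \<noteq> {}} =
    (\<Union>m\<in>P. {x \<in> topspace X. (x, m) \<in> Ob} \<inter> dom_U D m)"
    using Ob(2) domain_subset unfolding paths_from_def dom_U_def by force
  moreover have "openin X ({x \<in> topspace X. (x, m) \<in> Ob} \<inter> dom_U D m)" if "m \<in> P" for m
  proof -
    have "continuous_map X (prod_topology X (discrete_topology P)) (\<lambda>x. (x, m))"
      using that by (simp add: continuous_map_pairedI)
    then show ?thesis
      using openin_continuous_map_preimage[OF _ Ob(1)] openin_dom_U[OF that] by blast
  qed
  ultimately show ?thesis
    by auto
qed

lemma continuous_map_paths_from_fell: "continuous_map X (fell_topology L) (paths_from D)"
  by (intro continuous_map_fell_topologyI closedin_paths_from openin_paths_from_miss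
      openin_paths_from_hit)

lemma continuous_map_paths_from: "continuous_map X (boundary_topology P X D Q T) (paths_from D)"
  unfolding boundary_topology_def continuous_map_in_subtopology
  using continuous_map_paths_from_fell image_paths_from by blast

lemma open_map_paths_from: "open_map X (boundary_topology P X D Q T) (paths_from D)"
  unfolding open_map_def
proof (intro allI impI)
  fix W assume W: "openin X W"
  define V where "V = (W \<times> {\<one>\<^bsub>Q\<^esub>}) \<inter> D"
  have "openin (prod_topology X (discrete_topology P)) (W \<times> {\<one>\<^bsub>Q\<^esub>})"
    using W one_in_P by (simp add: openin_prod_Times_iff)
  then have "openin L V"
    unfolding V_def lam_topology_def by (rule openin_subtopology_Int)
  moreover have "paths_from D ` W = {A. closedin L A \<and> A \<inter> V \<noteq> {}} \<inter> boundary_path_space Q P X D T"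
  proof (intro equalityI subsetI)
    fix A assume "A \<in> paths_from D ` W"
    then obtain x where x: "x \<in> W" "A = paths_from D x"
      by blast
    then have "x \<in> topspace X"
      using W openin_subset by blast
    moreover have "(x, \<one>\<^bsub>Q\<^esub>) \<in> A \<inter> V"
      using x one_in_paths_from[OF \<open>x \<in> topspace X\<close>] unfolding V_def paths_from_def by auto
    ultimately show "A \<in> {A. closedin L A \<and> A \<inter> V \<noteq> {}} \<inter> boundary_path_space Q P X D T"
      using x closedin_paths_from paths_from_in_boundary by blast
  next
    fix A assume A: "A \<in> {A. closedin L A \<and> A \<inter> V \<noteq> {}} \<inter> boundary_path_space Q P X D T"
    then obtain x where "x \<in> topspace X" "A = paths_from D x"
      using boundary_path_eq_paths_from by blast
    moreover have "x \<in> W"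
      using A calculation(2) unfolding paths_from_def V_def by auto
    ultimately show "A \<in> paths_from D ` W"
      by blast
  qed
  ultimately show "openin (boundary_topology P X D Q T) (paths_from D ` W)"
    unfolding boundary_topology_def
    by (simp add: openin_fell_topology_hit openin_subtopology_Int)
qed

lemma homeomorphic_map_paths_from: "homeomorphic_map X (boundary_topology P X D Q T) (paths_from D)"
  using continuous_map_paths_from open_map_paths_from inj_on_paths_from
  by (simp add: bijective_open_imp_homeomorphic_map topspace_boundary_topology image_paths_from)

lemma boundary_dom_paths_from_iff:
  assumes "x \<in> topspace X"
  shows "(paths_from D x, m) \<in> boundary_dom Q P X D T \<longleftrightarrow> (x, m) \<in> D"
proof
  assume "(paths_from D x, m) \<in> boundary_dom Q P X D T"
  then show "(x, m) \<in> D"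
    unfolding boundary_dom_def path_shift_def paths_from_def lam_comp_def by auto
next
  assume xm: "(x, m) \<in> D"
  then have "path_shift Q D T (paths_from D x) m \<noteq> {}"
    using path_shift_paths_from one_in_paths_from action_closed by blast
  then show "(paths_from D x, m) \<in> boundary_dom Q P X D T"
    using xm domain_subset paths_from_in_boundary[OF assms] unfolding boundary_dom_def by auto
qed

lemma conjugate_boundary_action:
  "conjugate_partial_actions X D T (boundary_topology P X D Q T) (boundary_dom Q P X D T)
     (path_shift Q D T) (paths_from D)"
  by unfold_locales
    (simp_all add: homeomorphic_map_paths_from action_closed boundary_dom_paths_from_iff
      path_shift_paths_from)

end

theorem proposition6p20:
  fixes Q :: "('q, 'b) monoid_scheme" and P :: "'q set"
    and X :: "'x topology" and D :: "('x \<times> 'q) set" and T :: "'x \<Rightarrow> 'q \<Rightarrow> 'x"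
  assumes "quasi_lattice_ordered Q P"
    and "locally_compact_action Q P X D T"
    and "directed_action Q P D"
  shows "\<exists>J. homeomorphic_map X (boundary_topology P X D Q T) J \<and>
           (\<forall>(x, m)\<in>D. path_shift Q D T (J x) m \<noteq> {} \<and>
                        J (T x m) = path_shift Q D T (J x) m) \<and>
           groupoid_iso Q
             (action_groupoid Q P (topspace X) D T) (groupoid_topology Q P X D T)
             (action_groupoid Q P (boundary_path_space Q P X D T) (boundary_dom Q P X D T)
                (path_shift Q D T))
             (groupoid_topology Q P (boundary_topology P X D Q T) (boundary_dom Q P X D T)
                (path_shift Q D T))
             (\<lambda>(x, q, y). (J x, q, J y))"
proof -
  interpret directed_locally_compact_action Q P X D T
    using assms by unfold_locales
  have equivariant: "\<forall>(x, m)\<in>D. path_shift Q D T (paths_from D x) m \<noteq> {} \<and>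
      paths_from D (T x m) = path_shift Q D T (paths_from D x) m"
    using path_shift_paths_from one_in_paths_from action_closed by fastforce
  note iso = conjugate_partial_actions.groupoid_iso_gpd_map[OF conjugate_boundary_action, of Q P,
    unfolded topspace_boundary_topology]
  show ?thesis
    by (intro exI[of _ "paths_from D"] conjI homeomorphic_map_paths_from equivariant iso)
qed

end
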